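(* Let $H<G$ be countable abelian groups such that every element of $G/H$ has odd order, and let $\pi:G\to G/H$ be the quotient map. Let $\{H=G_0<G_1<G_2<\cdots\}$ be a one-step ascending chain associated to $H$, with sequence of generators $\{g_i\}_{i\ge1}$ and (odd) indexes $m_i=[G_i:G_{i-1}]=2k_i+1$. Then every $g\in G$ can be written uniquely as \[g=h_g+\sum_{i=1}^{\infty}r_i g_i\] with $h_g\in H$, $r_i\in[-k_i,k_i]\cap\mathbb Z$, and $r_i=0$ for all $i$ larger than some $i_0$.
   Context: A one-step ascending chain of a countable locally finite group $Q$ is a chain $\{1\}=Q_0<Q_1<\cdots$ of subgroups with $Q=\bigcup_iQ_i$, together with elements $q_i$ such that $Q_i$ is generated by $q_1,\dots,q_i$ and $q_{i+1}\notin Q_i$. Given such a chain $\{Q_i\}$ of $G/H$ (which is locally finite) with generators $q_i$, the associated chain of $G$ is $G_i=\pi^{-1}(Q_i)$; a sequence of generators is any $g_i\in G$ with $\pi(g_i)=q_i$, and the indexes are $m_i=[G_i:G_{i-1}]=[Q_i:Q_{i-1}]$. *)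

theory Defs
  imports Main "HOL-Library.Countable"
begin

definition zmult :: "int \<Rightarrow> 'a::ab_group_add \<Rightarrow> 'a" where
  "zmult n x = (if 0 \<le> n then (\<Sum>_\<in>{..<nat n}. x) else - (\<Sum>_\<in>{..<nat (- n)}. x))"

definition subgroup_of :: "'a::ab_group_add set \<Rightarrow> bool" where
  "subgroup_of H \<longleftrightarrow> 0 \<in> H \<and> (\<forall>x\<in>H. \<forall>y\<in>H. x + y \<in> H) \<and> (\<forall>x\<in>H. - x \<in> H)"

definition cosets_in :: "'a::ab_group_add set \<Rightarrow> 'a set \<Rightarrow> 'a set set" where
  "cosets_in A B = (\<lambda>a. (\<lambda>b. a + b) ` B) ` A"

definition index_in :: "'a::ab_group_add set \<Rightarrow> 'a set \<Rightarrow> nat" where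
  "index_in A B = card (cosets_in A B)"

definition has_odd_order_mod :: "'a::ab_group_add set \<Rightarrow> 'a \<Rightarrow> bool" where
  "has_odd_order_mod H g \<longleftrightarrow>
     (\<exists>n::nat. n > 0 \<and> zmult (int n) g \<in> H) \<and>
     odd (LEAST n::nat. n > 0 \<and> zmult (int n) g \<in> H)"

text \<open>G_i = pi^{-1}(<q_1,...,q_i>) = H + <g_1,...,g_i> in the abelian setting.\<close>
definition chain_step :: "'a::ab_group_add set \<Rightarrow> (nat \<Rightarrow> 'a) \<Rightarrow> nat \<Rightarrow> 'a set" where
  "chain_step H g i = {h + (\<Sum>j\<in>{1..i}. zmult (c j) (g j)) | h c. h \<in> H}"

definition one_step_chain :: "'a::ab_group_add set \<Rightarrow> (nat \<Rightarrow> 'a) \<Rightarrow> bool" where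
  "one_step_chain H g \<longleftrightarrow>
     (\<forall>i. g (Suc i) \<notin> chain_step H g i) \<and> (\<Union>i. chain_step H g i) = UNIV"

definition chain_k :: "'a::ab_group_add set \<Rightarrow> (nat \<Rightarrow> 'a) \<Rightarrow> nat \<Rightarrow> nat" where
  "chain_k H g i = (index_in (chain_step H g i) (chain_step H g (i - 1)) - 1) div 2"

end

theory Submission imports Defs begin

text \<open>
  Each \<open>G\<^sub>i\<close> arises from \<open>G\<^sub>i\<^sub>-\<^sub>1\<close> by adjoining one element \<open>g\<^sub>i\<close>, so \<open>G\<^sub>i/G\<^sub>i\<^sub>-\<^sub>1\<close> is cyclic,
  generated by the image of \<open>g\<^sub>i\<close>, and its order \<open>m\<^sub>i\<close> is the least \<open>m > 0\<close> with \<open>m g\<^sub>i \<in> G\<^sub>i\<^sub>-\<^sub>1\<close>.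
  This order divides the order of \<open>g\<^sub>i\<close> modulo \<open>H\<close>, hence is odd, \<open>m\<^sub>i = 2k\<^sub>i + 1\<close>, and the
  balanced residues \<open>-k\<^sub>i, \<dots>, k\<^sub>i\<close> form a system of representatives of \<open>\<int>/m\<^sub>i\<close>.
  Peeling off the coefficient of \<open>g\<^sub>i\<close> modulo \<open>m\<^sub>i\<close> for \<open>i = j, j-1, \<dots>, 1\<close> gives existence and
  uniqueness of the expansion for all elements of \<open>G\<^sub>j\<close>, and \<open>G = \<Union>\<^sub>j G\<^sub>j\<close>.
\<close>

lemma zmult_of_nat: "zmult (int n) x = (\<Sum>_\<in>{..<n}. x)"
  by (simp add: zmult_def)

lemma zmult_0 [simp]: "zmult 0 x = 0"
  by (simp add: zmult_def)

lemma zmult_1 [simp]: "zmult 1 x = x"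
  using zmult_of_nat[of 1 x] by simp

lemma zmult_neg_of_nat: "zmult (- int n) x = - zmult (int n) x"
  by (cases n) (auto simp: zmult_def add.commute)

lemma zmult_neg: "zmult (- a) x = - zmult a x"
proof (cases a rule: int_cases)
  case (neg n)
  then have "- a = int (Suc n)" by simp
  with neg show ?thesis by (metis zmult_neg_of_nat minus_minus)
qed (simp add: zmult_neg_of_nat)

lemma zmult_plus_1: "zmult (a + 1) x = zmult a x + x"
proof (cases a rule: int_cases)
  case (nonneg n)
  then show ?thesis
    using zmult_of_nat[of "Suc n" x] zmult_of_nat[of n x] by (simp add: add.commute)
next
  case (neg n)
  then have "a + 1 = - int n" by simp
  then show ?thesis
    using neg zmult_neg_of_nat[of n x] zmult_neg_of_nat[of "Suc n" x]
      zmult_of_nat[of "Suc n" x] zmult_of_nat[of n x]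
    by (simp add: add.commute)
qed

lemma zmult_add: "zmult (a + b) x = zmult a x + zmult b x"
proof (induction b rule: int_induct[where k = 0])
  case (step1 i)
  then show ?case using zmult_plus_1[of "a + i" x] zmult_plus_1[of i x] by (simp add: add.assoc)
next
  case (step2 i)
  then show ?case using zmult_plus_1[of "a + (i - 1)" x] zmult_plus_1[of "i - 1" x]
    by (simp add: algebra_simps)
qed simp

lemma zmult_diff: "zmult (a - b) x = zmult a x - zmult b x"
  using zmult_add[of a "- b" x] by (simp add: zmult_neg)

lemma zmult_mult: "zmult (a * b) x = zmult a (zmult b x)"
proof (induction a rule: int_induct[where k = 0])
  case (step1 i)
  then show ?case by (simp add: distrib_right zmult_add)
next
  case (step2 i)
  then show ?case by (simp add: left_diff_distrib zmult_diff)
qed simp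

lemma subgroup_of_diff_mem: "subgroup_of K \<Longrightarrow> x \<in> K \<Longrightarrow> y \<in> K \<Longrightarrow> x - y \<in> K"
  unfolding subgroup_of_def by (metis diff_conv_add_uminus)

lemma subgroup_of_zmult_mem:
  assumes "subgroup_of K" "x \<in> K"
  shows "zmult c x \<in> K"
proof -
  have "(\<Sum>_\<in>{..<n}. x) \<in> K" for n :: nat
    using assms by (induction n) (auto simp: subgroup_of_def)
  then have nat_mem: "zmult (int n) x \<in> K" for n
    by (simp only: zmult_of_nat)
  show ?thesis
  proof (cases "0 \<le> c")
    case True
    then show ?thesis using nat_mem[of "nat c"] by simp
  next
    case False
    then obtain n where "- c = int n" by (metis neg_0_le_iff_le nle_le nonneg_int_cases)
    then have "zmult c x = - zmult (int n) x"
      by (metis zmult_neg minus_minus)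
    then show ?thesis using nat_mem assms(1) by (simp add: subgroup_of_def)
  qed
qed

lemma coset_eqI:
  assumes "subgroup_of K" "a - b \<in> K"
  shows "(\<lambda>y. a + y) ` K = (\<lambda>y. b + y) ` K"
proof -
  have "(\<lambda>y. a + y) ` K \<subseteq> (\<lambda>y. b + y) ` K" if "a - b \<in> K" for a b
  proof
    fix z assume "z \<in> (\<lambda>y. a + y) ` K"
    then obtain y where "y \<in> K" "z = b + ((a - b) + y)" by auto
    moreover from this have "(a - b) + y \<in> K" using assms(1) that by (auto simp: subgroup_of_def)
    ultimately show "z \<in> (\<lambda>y. b + y) ` K" by blast
  qed
  moreover have "b - a \<in> K"
    using assms by (metis minus_diff_eq subgroup_of_def)
  ultimately show ?thesis using assms(2) by blast
qed

definition adjoin :: "'a::ab_group_add set \<Rightarrow> 'a \<Rightarrow> 'a set" where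
  "adjoin K a = {y + zmult c a | y c. y \<in> K}"

lemma subset_adjoin: "subgroup_of K \<Longrightarrow> K \<subseteq> adjoin K a"
  unfolding adjoin_def by (force intro: exI[of _ 0])

lemma subgroup_of_adjoin:
  assumes K: "subgroup_of K"
  shows "subgroup_of (adjoin K a)"
  unfolding subgroup_of_def
proof (intro conjI ballI)
  show "0 \<in> adjoin K a" using subset_adjoin[OF K] K by (auto simp: subgroup_of_def)
next
  fix x z assume "x \<in> adjoin K a" "z \<in> adjoin K a"
  then obtain y c y' c' where "y \<in> K" "y' \<in> K" "x = y + zmult c a" "z = y' + zmult c' a"
    by (auto simp: adjoin_def)
  moreover from this have "x + z = (y + y') + zmult (c + c') a"
    by (simp add: zmult_add algebra_simps)
  moreover have "y + y' \<in> K" using K calculation by (simp add: subgroup_of_def)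
  ultimately show "x + z \<in> adjoin K a" unfolding adjoin_def by blast
next
  fix x assume "x \<in> adjoin K a"
  then obtain y c where "y \<in> K" "x = y + zmult c a" by (auto simp: adjoin_def)
  moreover from this have "- x = - y + zmult (- c) a" by (simp add: zmult_neg)
  moreover have "- y \<in> K" using K calculation by (simp add: subgroup_of_def)
  ultimately show "- x \<in> adjoin K a" unfolding adjoin_def by blast
qed

section \<open>Balanced residues\<close>

lemma balanced_residue_exists:
  fixes k :: int
  assumes "0 \<le> k"
  shows "\<exists>r. \<bar>r\<bar> \<le> k \<and> (2 * k + 1) dvd c - r"
proof -
  let ?m = "2 * k + 1" and ?r = "c mod (2 * k + 1)"
  have dvd: "?m dvd c - ?r" "?m dvd c - (?r - ?m)"
    by (simp_all add: mod_eq_dvd_iff diff_diff_eq2 flip: diff_add_eq)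
  have "0 \<le> ?r" "?r \<le> 2 * k"
    using pos_mod_sign[of ?m c] pos_mod_bound[of ?m c] assms by linarith+
  then show ?thesis
  proof (cases "?r \<le> k")
    case True
    with \<open>0 \<le> ?r\<close> dvd(1) show ?thesis by (intro exI[of _ ?r]) auto
  next
    case False
    with \<open>?r \<le> 2 * k\<close> dvd(2) show ?thesis by (intro exI[of _ "?r - ?m"]) auto
  qed
qed

lemma balanced_residue_unique:
  fixes k r r' :: int
  assumes "\<bar>r\<bar> \<le> k" "\<bar>r'\<bar> \<le> k" "(2 * k + 1) dvd r - r'"
  shows "r = r'"
proof (rule ccontr)
  assume "r \<noteq> r'"
  then have "\<bar>2 * k + 1\<bar> \<le> \<bar>r - r'\<bar>" using dvd_imp_le_int assms(3) by force
  with assms(1,2) show False by linarith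
qed

section \<open>The order of an element modulo a subgroup\<close>

definition order_mod :: "'a::ab_group_add set \<Rightarrow> 'a \<Rightarrow> nat" where
  "order_mod K a = (LEAST n. n > 0 \<and> zmult (int n) a \<in> K)"

lemma zmult_mem_below_order_mod:
  assumes "n < order_mod K a" "zmult (int n) a \<in> K"
  shows "n = 0"
  using assms not_less_Least[of n "\<lambda>n. n > 0 \<and> zmult (int n) a \<in> K"]
  unfolding order_mod_def by auto

locale finite_order_mod =
  fixes K :: "'a::ab_group_add set" and a :: 'a
  assumes subgroup: "subgroup_of K"
    and finite_order: "\<exists>n > 0. zmult (int n) a \<in> K"
begin

lemma order_mod_pos: "order_mod K a > 0"
  and zmult_order_mod_mem: "zmult (int (order_mod K a)) a \<in> K"
  using LeastI_ex[OF finite_order] by (auto simp: order_mod_def)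

lemma zmult_mem_iff_dvd: "zmult c a \<in> K \<longleftrightarrow> int (order_mod K a) dvd c"
proof -
  let ?m = "order_mod K a"
  have multiple_mem: "zmult (q * int ?m) a \<in> K" for q
    using subgroup_of_zmult_mem[OF subgroup zmult_order_mod_mem] by (simp add: zmult_mult)
  have "int ?m dvd c" if c: "zmult c a \<in> K"
  proof -
    let ?r = "nat (c mod int ?m)"
    have "int ?r = c - (c div int ?m) * int ?m"
      using order_mod_pos by (simp add: minus_div_mult_eq_mod)
    then have "zmult (int ?r) a = zmult c a - zmult ((c div int ?m) * int ?m) a"
      by (simp add: zmult_diff)
    then have "zmult (int ?r) a \<in> K"
      using subgroup_of_diff_mem[OF subgroup c multiple_mem] by simp
    moreover have "?r < ?m"
      using order_mod_pos by (simp add: nat_less_iff)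
    ultimately have "?r = 0"
      by (rule zmult_mem_below_order_mod[rotated])
    moreover have "0 \<le> c mod int ?m"
      using order_mod_pos by simp
    ultimately show ?thesis
      by (simp add: dvd_eq_mod_eq_0)
  qed
  moreover have "zmult c a \<in> K" if "int ?m dvd c"
    using that multiple_mem by (auto simp: dvd_def mult.commute)
  ultimately show ?thesis by blast
qed

lemma index_in_adjoin: "index_in (adjoin K a) K = order_mod K a"
proof -
  let ?m = "order_mod K a"
  have zero: "0 \<in> K" using subgroup by (simp add: subgroup_of_def)
  define coset where "coset r = (\<lambda>b. zmult (int r) a + b) ` K" for r
  have "cosets_in (adjoin K a) K = coset ` {..<?m}"
  proof (intro equalityI subsetI)
    fix C assume "C \<in> cosets_in (adjoin K a) K"
    then obtain y c where y: "y \<in> K" and C: "C = (\<lambda>b. (y + zmult c a) + b) ` K"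
      by (auto simp: cosets_in_def adjoin_def)
    define r where "r = nat (c mod int ?m)"
    have "int ?m dvd c - int r"
      using order_mod_pos by (simp add: r_def mod_eq_dvd_iff)
    then have "zmult c a - zmult (int r) a \<in> K"
      by (simp flip: zmult_diff add: zmult_mem_iff_dvd)
    then have "(y + zmult c a) - zmult (int r) a \<in> K"
      using y subgroup by (metis add_diff_eq subgroup_of_def)
    then have "C = coset r" unfolding C coset_def by (rule coset_eqI[OF subgroup])
    moreover have "r < ?m" using order_mod_pos by (simp add: r_def nat_less_iff)
    ultimately show "C \<in> coset ` {..<?m}" by auto
  next
    fix C assume "C \<in> coset ` {..<?m}"
    moreover have "0 + zmult (int r) a \<in> adjoin K a" for r
      using zero unfolding adjoin_def by blast
    ultimately show "C \<in> cosets_in (adjoin K a) K"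
      unfolding cosets_in_def coset_def by force
  qed
  moreover have "inj_on coset {..<?m}"
  proof (rule inj_onI)
    fix r r' assume r: "r \<in> {..<?m}" "r' \<in> {..<?m}" and "coset r = coset r'"
    moreover have "zmult (int r) a + 0 \<in> coset r"
      using zero unfolding coset_def by blast
    ultimately obtain b where "b \<in> K" "zmult (int r) a = zmult (int r') a + b"
      unfolding coset_def by auto
    then have "zmult (int r - int r') a \<in> K"
      by (simp add: zmult_diff)
    then have dvd: "int ?m dvd int r - int r'"
      using zmult_mem_iff_dvd by blast
    show "r = r'"
    proof (rule ccontr)
      assume "r \<noteq> r'"
      then have "int ?m \<le> \<bar>int r - int r'\<bar>" using dvd_imp_le_int[OF _ dvd] by simp
      with r show False by auto
    qed
  qed
  ultimately show ?thesis
    by (simp add: index_in_def card_image)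
qed

end

lemma order_mod_dvd:
  assumes "finite_order_mod H a" "subgroup_of K" "H \<subseteq> K"
  shows "order_mod K a dvd order_mod H a"
proof -
  interpret H: finite_order_mod H a by fact
  interpret K: finite_order_mod K a
    using assms H.order_mod_pos H.zmult_order_mod_mem by unfold_locales blast+
  show ?thesis
    using K.zmult_mem_iff_dvd assms(3) H.zmult_order_mod_mem by auto
qed

section \<open>The ascending chain\<close>

lemma chain_step_0 [simp]: "chain_step H g 0 = H"
  unfolding chain_step_def by auto

lemma chain_step_Suc: "chain_step H g (Suc j) = adjoin (chain_step H g j) (g (Suc j))"
proof (intro equalityI subsetI)
  fix x assume "x \<in> chain_step H g (Suc j)"
  then obtain h c where "h \<in> H" "x = h + (\<Sum>i\<in>{1..Suc j}. zmult (c i) (g i))"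
    unfolding chain_step_def by blast
  moreover from this have "x = (h + (\<Sum>i\<in>{1..j}. zmult (c i) (g i))) + zmult (c (Suc j)) (g (Suc j))"
    by (simp add: add.assoc)
  ultimately show "x \<in> adjoin (chain_step H g j) (g (Suc j))"
    unfolding chain_step_def adjoin_def by blast
next
  fix x assume "x \<in> adjoin (chain_step H g j) (g (Suc j))"
  then obtain h c a where h: "h \<in> H"
    and x: "x = h + (\<Sum>i\<in>{1..j}. zmult (c i) (g i)) + zmult a (g (Suc j))"
    unfolding chain_step_def adjoin_def by blast
  have "(\<Sum>i\<in>{1..j}. zmult ((c(Suc j := a)) i) (g i)) = (\<Sum>i\<in>{1..j}. zmult (c i) (g i))"
    by (rule sum.cong) auto
  with x have "x = h + (\<Sum>i\<in>{1..Suc j}. zmult ((c(Suc j := a)) i) (g i))"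
    by (simp add: add.assoc)
  with h show "x \<in> chain_step H g (Suc j)"
    unfolding chain_step_def by blast
qed

lemma subgroup_of_chain_step: "subgroup_of H \<Longrightarrow> subgroup_of (chain_step H g j)"
  by (induction j) (simp_all add: chain_step_Suc subgroup_of_adjoin)

lemma subset_chain_step: "subgroup_of H \<Longrightarrow> H \<subseteq> chain_step H g j"
  by (induction j)
    (auto simp: chain_step_Suc dest: subset_adjoin[OF subgroup_of_chain_step])

lemma zmult_generator_mem_chain_step_iff:
  assumes H: "subgroup_of H" and odd: "\<forall>x. has_odd_order_mod H x"
  shows "zmult c (g (Suc j)) \<in> chain_step H g j \<longleftrightarrow> (2 * int (chain_k H g (Suc j)) + 1) dvd c"
proof -
  let ?K = "chain_step H g j" and ?a = "g (Suc j)"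
  interpret H: finite_order_mod H ?a
    using H odd by unfold_locales (auto simp: has_odd_order_mod_def)
  interpret K: finite_order_mod ?K ?a
    using subgroup_of_chain_step[OF H] subset_chain_step[OF H] H.order_mod_pos
      H.zmult_order_mod_mem by unfold_locales blast+
  have "odd (order_mod H ?a)"
    using odd by (simp add: has_odd_order_mod_def order_mod_def)
  then have "odd (order_mod ?K ?a)"
    using order_mod_dvd[OF H.finite_order_mod_axioms subgroup_of_chain_step subset_chain_step] H
    by (meson dvd_trans)
  moreover have "chain_k H g (Suc j) = (order_mod ?K ?a - 1) div 2"
    by (simp add: chain_k_def chain_step_Suc K.index_in_adjoin)
  ultimately have "int (order_mod ?K ?a) = 2 * int (chain_k H g (Suc j)) + 1"
    by (auto elim: oddE)
  then show ?thesis using K.zmult_mem_iff_dvd by simp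
qed

section \<open>Existence and uniqueness of expansions\<close>

lemma chain_step_expansion_exists:
  assumes H: "subgroup_of H" and odd: "\<forall>x. has_odd_order_mod H x"
    and "x \<in> chain_step H g j"
  shows "\<exists>h r. h \<in> H \<and> r 0 = 0 \<and> (\<forall>i\<ge>1. \<bar>r i\<bar> \<le> int (chain_k H g i)) \<and>
     (\<forall>i>j. r i = 0) \<and> x = h + (\<Sum>i\<in>{1..j}. zmult (r i) (g i))"
  using assms(3)
proof (induction j arbitrary: x)
  case 0
  then show ?case by (intro exI[of _ x] exI[of _ "\<lambda>_. 0"]) auto
next
  case (Suc j)
  let ?K = "chain_step H g j" and ?a = "g (Suc j)"
  obtain y c where y: "y \<in> ?K" and x: "x = y + zmult c ?a"
    using Suc.prems by (auto simp: chain_step_Suc adjoin_def)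
  obtain d where d: "\<bar>d\<bar> \<le> int (chain_k H g (Suc j))" "zmult (c - d) ?a \<in> ?K"
    using balanced_residue_exists[of "int (chain_k H g (Suc j))" c]
      zmult_generator_mem_chain_step_iff[OF H odd] by auto
  have "y + zmult (c - d) ?a \<in> ?K"
    using subgroup_of_chain_step[OF H] y d(2) by (auto simp: subgroup_of_def)
  then obtain h r where hr: "h \<in> H" "r 0 = 0" "\<forall>i\<ge>1. \<bar>r i\<bar> \<le> int (chain_k H g i)"
      "\<forall>i>j. r i = 0" "y + zmult (c - d) ?a = h + (\<Sum>i\<in>{1..j}. zmult (r i) (g i))"
    using Suc.IH by blast
  have "(\<Sum>i\<in>{1..j}. zmult ((r(Suc j := d)) i) (g i)) = (\<Sum>i\<in>{1..j}. zmult (r i) (g i))"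
    by (rule sum.cong) auto
  moreover have "x = (y + zmult (c - d) ?a) + zmult d ?a"
    using x by (simp add: zmult_diff)
  ultimately have "x = h + (\<Sum>i\<in>{1..Suc j}. zmult ((r(Suc j := d)) i) (g i))"
    using hr(5) by (simp add: add.assoc)
  with hr d(1) show ?case
    by (intro exI[of _ h] exI[of _ "r(Suc j := d)"]) auto
qed

lemma chain_step_expansion_unique:
  assumes H: "subgroup_of H" and odd: "\<forall>x. has_odd_order_mod H x"
    and "h \<in> H" "h' \<in> H"
    and "\<forall>i\<ge>1. \<bar>r i\<bar> \<le> int (chain_k H g i)" "\<forall>i\<ge>1. \<bar>r' i\<bar> \<le> int (chain_k H g i)"
    and "h + (\<Sum>i\<in>{1..j}. zmult (r i) (g i)) = h' + (\<Sum>i\<in>{1..j}. zmult (r' i) (g i))"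
  shows "h = h' \<and> (\<forall>i\<in>{1..j}. r i = r' i)"
  using assms(7)
proof (induction j)
  case (Suc j)
  let ?a = "g (Suc j)"
  define y where "y = h + (\<Sum>i\<in>{1..j}. zmult (r i) (g i))"
  define y' where "y' = h' + (\<Sum>i\<in>{1..j}. zmult (r' i) (g i))"
  have y_mem: "y \<in> chain_step H g j" "y' \<in> chain_step H g j"
    unfolding y_def y'_def chain_step_def using assms(3,4) by blast+
  have eq: "y + zmult (r (Suc j)) ?a = y' + zmult (r' (Suc j)) ?a"
    using Suc.prems by (simp add: y_def y'_def add.assoc)
  then have "zmult (r (Suc j) - r' (Suc j)) ?a = y' - y"
    by (simp add: zmult_diff algebra_simps)
  then have "zmult (r (Suc j) - r' (Suc j)) ?a \<in> chain_step H g j"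
    using subgroup_of_diff_mem[OF subgroup_of_chain_step[OF H]] y_mem by simp
  then have "(2 * int (chain_k H g (Suc j)) + 1) dvd r (Suc j) - r' (Suc j)"
    using zmult_generator_mem_chain_step_iff[OF H odd] by blast
  moreover have "\<bar>r (Suc j)\<bar> \<le> int (chain_k H g (Suc j))" "\<bar>r' (Suc j)\<bar> \<le> int (chain_k H g (Suc j))"
    using assms(5,6) by simp_all
  ultimately have last_eq: "r (Suc j) = r' (Suc j)"
    using balanced_residue_unique by blast
  with eq have "y = y'" by simp
  then have "h = h' \<and> (\<forall>i\<in>{1..j}. r i = r' i)"
    using Suc.IH by (simp add: y_def y'_def)
  with last_eq show ?case
    by (auto simp: le_Suc_eq)
qed simp

lemma sum_atLeastAtMost_eq_if_vanishing:
  fixes f :: "nat \<Rightarrow> 'a::comm_monoid_add"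
  assumes "\<forall>i>n. f i = 0" "\<forall>i>n'. f i = 0"
  shows "(\<Sum>i\<in>{m..n}. f i) = (\<Sum>i\<in>{m..n'}. f i)"
proof -
  have "(\<Sum>i\<in>{m..n}. f i) = (\<Sum>i\<in>{m..max n n'}. f i)"
    using assms(1) by (intro sum.mono_neutral_left) auto
  also have "\<dots> = (\<Sum>i\<in>{m..n'}. f i)"
    using assms(2) by (intro sum.mono_neutral_right) auto
  finally show ?thesis .
qed

definition balanced_expansion :: "'a::ab_group_add set \<Rightarrow> (nat \<Rightarrow> 'a) \<Rightarrow> 'a \<Rightarrow> 'a \<Rightarrow> (nat \<Rightarrow> int) \<Rightarrow> bool" where
  "balanced_expansion H g x h r \<longleftrightarrow> h \<in> H \<and> r 0 = 0 \<and>
     (\<forall>i\<ge>1. \<bar>r i\<bar> \<le> int (chain_k H g i)) \<and>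
     (\<exists>i0. \<forall>i>i0. r i = 0) \<and>
     (\<forall>i0. (\<forall>i>i0. r i = 0) \<longrightarrow> x = h + (\<Sum>i\<in>{1..i0}. zmult (r i) (g i)))"

lemma balanced_expansion_exists:
  assumes "subgroup_of H" "\<forall>x. has_odd_order_mod H x" "x \<in> chain_step H g j"
  shows "\<exists>h r. balanced_expansion H g x h r"
proof -
  obtain h r where hr: "h \<in> H" "r 0 = 0" "\<forall>i\<ge>1. \<bar>r i\<bar> \<le> int (chain_k H g i)"
     "\<forall>i>j. r i = 0" "x = h + (\<Sum>i\<in>{1..j}. zmult (r i) (g i))"
    using chain_step_expansion_exists[OF assms] by blast
  have "x = h + (\<Sum>i\<in>{1..n}. zmult (r i) (g i))" if "\<forall>i>n. r i = 0" for n
    using hr(4,5) that sum_atLeastAtMost_eq_if_vanishing[of n "\<lambda>i. zmult (r i) (g i)" j] by simp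
  with hr(1-4) show ?thesis
    unfolding balanced_expansion_def by blast
qed

lemma balanced_expansion_unique:
  assumes "subgroup_of H" "\<forall>x. has_odd_order_mod H x"
    and "balanced_expansion H g x h r" "balanced_expansion H g x h' r'"
  shows "h = h' \<and> r = r'"
proof -
  from assms(3,4) obtain j j' where
    h: "h \<in> H" "h' \<in> H" and r0: "r 0 = 0" "r' 0 = 0" and
    bounds: "\<forall>i\<ge>1. \<bar>r i\<bar> \<le> int (chain_k H g i)" "\<forall>i\<ge>1. \<bar>r' i\<bar> \<le> int (chain_k H g i)" and
    "\<forall>i>j. r i = 0" "\<forall>i>j'. r' i = 0" and
    expansion: "\<forall>n. (\<forall>i>n. r i = 0) \<longrightarrow> x = h + (\<Sum>i\<in>{1..n}. zmult (r i) (g i))"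
      "\<forall>n. (\<forall>i>n. r' i = 0) \<longrightarrow> x = h' + (\<Sum>i\<in>{1..n}. zmult (r' i) (g i))"
    unfolding balanced_expansion_def by blast
  then have vanish: "\<forall>i>max j j'. r i = 0" "\<forall>i>max j j'. r' i = 0"
    by simp_all
  have "x = h + (\<Sum>i\<in>{1..max j j'}. zmult (r i) (g i))"
    and "x = h' + (\<Sum>i\<in>{1..max j j'}. zmult (r' i) (g i))"
    using expansion vanish by blast+
  then have "h + (\<Sum>i\<in>{1..max j j'}. zmult (r i) (g i)) = h' + (\<Sum>i\<in>{1..max j j'}. zmult (r' i) (g i))"
    by simp
  then have "h = h'" and low: "\<forall>i\<in>{1..max j j'}. r i = r' i"
    using chain_step_expansion_unique[OF assms(1,2) h bounds] by simp_all
  have "r i = r' i" for i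
    using low r0 vanish by (cases "i = 0"; cases "i \<le> max j j'") (auto simp: not_le)
  with \<open>h = h'\<close> show ?thesis by auto
qed

theorem mainTheorem13:
  fixes H :: "'a::{ab_group_add, countable} set" and g :: "nat \<Rightarrow> 'a"
  assumes "subgroup_of H" and "H \<noteq> UNIV"
    and "\<forall>x. has_odd_order_mod H x"
    and "one_step_chain H g"
  shows "\<forall>x. \<exists>!(h, r). h \<in> H \<and> r 0 = 0 \<and>
            (\<forall>i\<ge>1. \<bar>r i\<bar> \<le> int (chain_k H g i)) \<and>
            (\<exists>i0. \<forall>i>i0. r i = 0) \<and>
            (\<forall>i0. (\<forall>i>i0. r i = 0) \<longrightarrow> x = h + (\<Sum>i\<in>{1..i0}. zmult (r i) (g i)))"
proof -
  have "\<exists>!(h, r). balanced_expansion H g x h r" for x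
  proof -
    obtain j where "x \<in> chain_step H g j"
      using assms(4) unfolding one_step_chain_def by blast
    then obtain h r where "balanced_expansion H g x h r"
      using balanced_expansion_exists[OF assms(1,3)] by blast
    then show ?thesis
      using balanced_expansion_unique[OF assms(1,3)] by (intro ex1I[of _ "(h, r)"]) auto
  qed
  then show ?thesis
    unfolding balanced_expansion_def by blast
qed

end
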